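(* Let $k(x)=x^2$ and for $\xi>0$ let $S_\xi$ be the operator on $L^2(0,\xi)$ given by $(S_\xi f)(x)=f(x)+\int_0^\xi f(t)(x-t)^2\,dt$. Then $S_\xi$ is invertible for all $\xi>0$ except where $\Delta(\xi)=\frac{\xi^9}{1080}-\frac{\xi^6}{30}+1$ vanishes, and for every $\xi>0$ at which $S_\xi$ is invertible, $$h_2(\xi):=(S_\xi^{-1}1)(\xi)=\frac{\frac16\xi^3-1}{\frac1{180}\xi^6-\frac16\xi^3-1}.$$ Moreover the rational function $r(x)=\frac{1}{\sqrt2\,h_2(2x)}$ has only simple zeros and simple poles, satisfies $r''(x_k)=0$ at every zero $x_k$ of $r$, and $q''(y_\ell)=0$ at every zero $y_\ell$ of $q=1/r$.
   Context: Here $S_\xi^{-1}1$ is a polynomial in $x$, and $(S_\xi^{-1}1)(\xi)$ denotes its value at $x=\xi$. *)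

theory Defs
  imports "HOL-Analysis.Analysis" "HOL-Computational_Algebra.Polynomial"
begin

text \<open>Elements of L^2(0,xi), represented by (real-valued) functions; equality in L^2 is
  equality almost everywhere on the interval.\<close>
definition L2 :: "real \<Rightarrow> (real \<Rightarrow> real) \<Rightarrow> bool" where
  "L2 xi f \<longleftrightarrow> set_borel_measurable lborel {0..xi} f
      \<and> set_integrable lborel {0..xi} (\<lambda>x. (f x)\<^sup>2)"

definition ae_eq_on :: "real \<Rightarrow> (real \<Rightarrow> real) \<Rightarrow> (real \<Rightarrow> real) \<Rightarrow> bool" where
  "ae_eq_on xi f g \<longleftrightarrow> (AE x in lborel. x \<in> {0..xi} \<longrightarrow> f x = g x)"

definition Sop :: "real \<Rightarrow> (real \<Rightarrow> real) \<Rightarrow> real \<Rightarrow> real" where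
  "Sop xi f x = f x + (LINT t:{0..xi}|lborel. f t * (x - t)\<^sup>2)"

text \<open>S_xi is invertible on L^2(0,xi): bijective on L^2 classes (bounded inverse then
  follows from the open mapping theorem, S_xi being bounded).\<close>
definition S_invertible :: "real \<Rightarrow> bool" where
  "S_invertible xi \<longleftrightarrow>
     (\<forall>g. L2 xi g \<longrightarrow> (\<exists>f. L2 xi f \<and> ae_eq_on xi (Sop xi f) g))
   \<and> (\<forall>f1 f2. L2 xi f1 \<and> L2 xi f2 \<and> ae_eq_on xi (Sop xi f1) (Sop xi f2)
        \<longrightarrow> ae_eq_on xi f1 f2)"

definition Delta :: "real \<Rightarrow> real" where
  "Delta xi = xi ^ 9 / 1080 - xi ^ 6 / 30 + 1"

definition h2 :: "complex \<Rightarrow> complex" where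
  "h2 z = (z ^ 3 / 6 - 1) / (z ^ 6 / 180 - z ^ 3 / 6 - 1)"

definition r_fun :: "complex \<Rightarrow> complex" where
  "r_fun x = 1 / (complex_of_real (sqrt 2) * h2 (2 * x))"

definition q_fun :: "complex \<Rightarrow> complex" where
  "q_fun x = 1 / r_fun x"

end

theory Submission
  imports Defs
begin

text \<open>Expanding \<open>(x - t)\<^sup>2\<close> shows \<open>S\<^sub>\<xi> f = f + q\<close>, where \<open>q\<close> is a quadratic
  polynomial whose coefficients are the moments \<open>\<integral>\<^sub>0\<^sup>\<xi> f(t) t\<^sup>i dt\<close>, \<open>i \<le> 2\<close>.
  So a solution of \<open>S\<^sub>\<xi> f = g\<close> has the form \<open>f = g - q\<close>, and taking moments turns
  the equation into a \<open>3 \<times> 3\<close> linear system \<open>(I + M\<^sub>\<xi>) c = b(g)\<close> for the coefficient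
  vector \<open>c\<close> of \<open>q\<close>. Hence \<open>S\<^sub>\<xi>\<close> is invertible iff \<open>det (I + M\<^sub>\<xi>) = \<Delta>(\<xi>)\<close> is
  nonzero, and solving the system for \<open>g = 1\<close> gives
  \<open>S\<^sub>\<xi>\<^sup>-\<^sup>1 1 = (\<xi>\<^sup>3/6 - 1 - \<xi>\<^sup>2 t + \<xi> t\<^sup>2) / (\<xi>\<^sup>6/180 - \<xi>\<^sup>3/6 - 1)\<close>.

  For the second part, \<open>r = P / Q\<close> with \<open>P = 16x\<^sup>6 - 60x\<^sup>3 - 45\<close> and
  \<open>Q = 15\<surd>2 (4x\<^sup>3 - 3)\<close>. At a zero of \<open>P\<close> we have \<open>r'' = (P''Q - 2P'Q') / Q\<^sup>2\<close>, and
  \<open>P''Q - 2P'Q' = -360\<surd>2 x P\<close>; symmetrically \<open>Q''P - 2Q'P' = -4\<surd>2 x Q\<^sup>2\<close>.\<close>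

lemma det_eq_0_iff_nontrivial_kernel:
  fixes A :: "'a::field^'n^'n"
  shows "det A = 0 \<longleftrightarrow> (\<exists>x. x \<noteq> 0 \<and> A *v x = 0)"
  by (metis invertible_det_nz invertible_left_inverse matrix_left_invertible_ker)

lemma coprime_imp_no_common_root:
  fixes p q :: "'a::field poly"
  assumes "coprime p q" "poly p x = 0"
  shows "poly q x \<noteq> 0"
proof
  assume "poly q x = 0"
  with assms have "is_unit [:-x, 1:]"
    by (intro coprime_common_divisor[of p q]) (simp_all add: poly_eq_0_iff_dvd)
  then show False
    by (simp add: is_unit_iff_degree)
qed

lemma deriv2_poly_quotient_at_root:
  fixes P Q :: "'a::real_normed_field poly"
  assumes h: "\<And>x. poly Q x \<noteq> 0 \<Longrightarrow> h x = poly P x / poly Q x"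
    and Q: "poly Q z \<noteq> 0" and P: "poly P z = 0"
  shows "deriv (deriv h) z =
    (poly (pderiv (pderiv P)) z * poly Q z - 2 * poly (pderiv P) z * poly (pderiv Q) z) / (poly Q z)\<^sup>2"
proof -
  define R where
    "R = (\<lambda>y. (poly (pderiv P) y * poly Q y - poly P y * poly (pderiv Q) y) / (poly Q y * poly Q y))"
  have U: "open {x. poly Q x \<noteq> 0}"
    by (intro open_Collect_neq continuous_intros)
  have "deriv h y = R y" if y: "poly Q y \<noteq> 0" for y
  proof -
    have "eventually (\<lambda>x. poly Q x \<noteq> 0) (nhds y)"
      using eventually_nhds_in_open[OF U] y by simp
    then have "eventually (\<lambda>x. h x = poly P x / poly Q x) (nhds y)"
      by (rule eventually_mono) (rule h)
    then have "deriv h y = deriv (\<lambda>x. poly P x / poly Q x) y"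
      by (rule deriv_cong_ev) simp
    also have "\<dots> = R y"
      using DERIV_divide[OF poly_DERIV poly_DERIV y] by (intro DERIV_imp_deriv) (simp add: R_def)
    finally show ?thesis .
  qed
  moreover have "eventually (\<lambda>y. poly Q y \<noteq> 0) (nhds z)"
    using eventually_nhds_in_open[OF U] Q by simp
  ultimately have "eventually (\<lambda>y. deriv h y = R y) (nhds z)"
    by (auto elim!: eventually_mono)
  then have "deriv (deriv h) z = deriv R z"
    by (rule deriv_cong_ev) simp
  also have "\<dots> = (poly (pderiv (pderiv P)) z * poly Q z - 2 * poly (pderiv P) z * poly (pderiv Q) z) / (poly Q z)\<^sup>2"
  proof (rule DERIV_imp_deriv)
    let ?P1 = "poly (pderiv P) z" and ?P2 = "poly (pderiv (pderiv P)) z"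
      and ?Q1 = "poly (pderiv Q) z" and ?Q2 = "poly (pderiv (pderiv Q)) z"
    have "(R has_field_derivative
        ((?P2 * poly Q z + ?Q1 * ?P1 - (?P1 * ?Q1 + ?Q2 * poly P z)) * (poly Q z * poly Q z)
          - (?P1 * poly Q z - poly P z * ?Q1) * (?Q1 * poly Q z + ?Q1 * poly Q z))
        / (poly Q z * poly Q z * (poly Q z * poly Q z))) (at z)"
      unfolding R_def using Q by (intro DERIV_divide DERIV_diff DERIV_mult poly_DERIV) simp
    then show "(R has_field_derivative (?P2 * poly Q z - 2 * ?P1 * ?Q1) / (poly Q z)\<^sup>2) (at z)"
      by (rule DERIV_cong) (use Q P in \<open>simp add: field_simps power2_eq_square\<close>)
  qed
  finally show ?thesis .
qed

definition moment :: "real \<Rightarrow> (real \<Rightarrow> real) \<Rightarrow> nat \<Rightarrow> real" where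
  "moment xi f i = (LINT t:{0..xi}|lborel. f t * t ^ i)"

definition quadratic :: "real^3 \<Rightarrow> real \<Rightarrow> real" where
  "quadratic c t = c$1 + c$2 * t + c$3 * t\<^sup>2"

definition Sop_coeffs :: "real \<Rightarrow> (real \<Rightarrow> real) \<Rightarrow> real^3" where
  "Sop_coeffs xi f = vector [moment xi f 2, - 2 * moment xi f 1, moment xi f 0]"

definition moment_matrix :: "real \<Rightarrow> real^3^3" where
  "moment_matrix xi = vector [
     vector [xi^3/3, xi^4/4, xi^5/5],
     vector [-(xi^2), -2 * xi^3/3, -(xi^4)/2],
     vector [xi, xi^2/2, xi^3/3]]"

lemma L2_moment_integrable:
  assumes "L2 xi f"
  shows "set_integrable lborel {0..xi} (\<lambda>t. f t * t ^ i)"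
proof (rule set_integrable_bound)
  have "set_integrable lborel {0..xi} (\<lambda>t. 1 + (f t)\<^sup>2)"
    using assms unfolding L2_def
    by (intro set_integral_add(1)[OF borel_integrable_atLeastAtMost'[OF continuous_on_const]]) auto
  then show "set_integrable lborel {0..xi} (\<lambda>t. xi ^ i * (1 + (f t)\<^sup>2))"
    by (rule set_integrable_mult_right)
  have "(\<lambda>x. indicator {0..xi} x *\<^sub>R f x) \<in> borel_measurable lborel"
    using assms unfolding L2_def set_borel_measurable_def by simp
  then have "(\<lambda>x. indicator {0..xi} x *\<^sub>R f x * x ^ i) \<in> borel_measurable lborel"
    by measurable
  then show "set_borel_measurable lborel {0..xi} (\<lambda>t. f t * t ^ i)"
    unfolding set_borel_measurable_def by (simp add: mult.assoc)
  show "AE t in lborel. t \<in> {0..xi} \<longrightarrow> norm (f t * t ^ i) \<le> norm (xi ^ i * (1 + (f t)\<^sup>2))"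
  proof (intro AE_I2 impI)
    fix t assume t: "t \<in> {0..xi}"
    have "0 \<le> (\<bar>f t\<bar> - 1)\<^sup>2"
      by simp
    then have "\<bar>f t\<bar> \<le> 1 + (f t)\<^sup>2"
      by (simp add: power2_eq_square algebra_simps abs_mult_self_eq)
    moreover have "\<bar>t ^ i\<bar> \<le> xi ^ i"
      using t by (simp add: power_abs power_mono)
    ultimately have "\<bar>f t\<bar> * \<bar>t ^ i\<bar> \<le> (1 + (f t)\<^sup>2) * xi ^ i"
      by (intro mult_mono) auto
    then show "norm (f t * t ^ i) \<le> norm (xi ^ i * (1 + (f t)\<^sup>2))"
      using t by (simp add: abs_mult mult.commute)
  qed
qed

lemma continuous_on_imp_L2:
  assumes "continuous_on {0..xi} f"
  shows "L2 xi f"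
proof -
  have "set_integrable lborel {0..xi} f"
    using assms by (rule borel_integrable_atLeastAtMost')
  then have "set_borel_measurable lborel {0..xi} f"
    unfolding set_integrable_def set_borel_measurable_def by simp
  moreover have "set_integrable lborel {0..xi} (\<lambda>x. (f x)\<^sup>2)"
    using assms by (intro borel_integrable_atLeastAtMost' continuous_intros)
  ultimately show ?thesis
    unfolding L2_def by simp
qed

lemma L2_quadratic: "L2 xi (quadratic c)"
  unfolding quadratic_def by (intro continuous_on_imp_L2 continuous_intros)

lemma L2_diff:
  assumes "L2 xi f" "L2 xi g"
  shows "L2 xi (\<lambda>t. f t - g t)"
proof -
  have "(\<lambda>x. indicator {0..xi} x *\<^sub>R f x) \<in> borel_measurable lborel"
    and "(\<lambda>x. indicator {0..xi} x *\<^sub>R g x) \<in> borel_measurable lborel"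
    using assms unfolding L2_def set_borel_measurable_def by simp_all
  then have "(\<lambda>x. indicator {0..xi} x *\<^sub>R f x - indicator {0..xi} x *\<^sub>R g x) \<in> borel_measurable lborel"
    by measurable
  then have meas: "set_borel_measurable lborel {0..xi} (\<lambda>t. f t - g t)"
    unfolding set_borel_measurable_def by (simp add: right_diff_distrib)
  have "set_integrable lborel {0..xi} (\<lambda>t. (f t - g t)\<^sup>2)"
  proof (rule set_integrable_bound)
    show "set_integrable lborel {0..xi} (\<lambda>t. 2 * (f t)\<^sup>2 + 2 * (g t)\<^sup>2)"
      using assms unfolding L2_def by (intro set_integral_add set_integrable_mult_right) auto
    have "(\<lambda>x. (indicator {0..xi} x *\<^sub>R (f x - g x))\<^sup>2) \<in> borel_measurable lborel"
      using meas unfolding set_borel_measurable_def by measurable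
    moreover have "(\<lambda>x. (indicator {0..xi} x *\<^sub>R (f x - g x))\<^sup>2)
        = (\<lambda>x. indicator {0..xi} x *\<^sub>R (f x - g x)\<^sup>2)"
      by (simp add: fun_eq_iff indicator_def)
    ultimately show "set_borel_measurable lborel {0..xi} (\<lambda>t. (f t - g t)\<^sup>2)"
      unfolding set_borel_measurable_def by simp
    show "AE t in lborel. t \<in> {0..xi} \<longrightarrow> norm ((f t - g t)\<^sup>2) \<le> norm (2 * (f t)\<^sup>2 + 2 * (g t)\<^sup>2)"
    proof (intro AE_I2 impI)
      fix t
      have "0 \<le> (f t + g t)\<^sup>2"
        by simp
      then have "(f t - g t)\<^sup>2 \<le> 2 * (f t)\<^sup>2 + 2 * (g t)\<^sup>2"
        by (simp add: power2_eq_square algebra_simps)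
      then show "norm ((f t - g t)\<^sup>2) \<le> norm (2 * (f t)\<^sup>2 + 2 * (g t)\<^sup>2)"
        by simp
    qed
  qed
  with meas show ?thesis
    unfolding L2_def by simp
qed

lemma moment_diff:
  assumes "L2 xi f" "L2 xi g"
  shows "moment xi (\<lambda>t. f t - g t) i = moment xi f i - moment xi g i"
  unfolding moment_def left_diff_distrib
  using assms by (intro set_integral_diff L2_moment_integrable)

lemma moment_cong_AE:
  assumes "L2 xi f" "L2 xi g" "ae_eq_on xi f g"
  shows "moment xi f i = moment xi g i"
proof -
  have meas: "(\<lambda>t. indicator {0..xi} t *\<^sub>R (h t * t ^ i)) \<in> borel_measurable lborel" if "L2 xi h" for h
    using L2_moment_integrable[OF that] unfolding set_integrable_def by auto
  show ?thesis
    unfolding moment_def set_lebesgue_integral_def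
  proof (rule integral_cong_AE[OF meas[OF assms(1)] meas[OF assms(2)]])
    show "AE t in lborel. indicator {0..xi} t *\<^sub>R (f t * t ^ i) = indicator {0..xi} t *\<^sub>R (g t * t ^ i)"
      using assms(3) unfolding ae_eq_on_def by eventually_elim (simp add: indicator_def)
  qed
qed

lemma moment_quadratic:
  assumes "0 \<le> xi"
  shows "moment xi (quadratic c) i =
    c$1 * xi ^ (i+1) / (i+1) + c$2 * xi ^ (i+2) / (i+2) + c$3 * xi ^ (i+3) / (i+3)"
proof -
  let ?F = "\<lambda>t::real. c$1 * t ^ (i+1) / (i+1) + c$2 * t ^ (i+2) / (i+2) + c$3 * t ^ (i+3) / (i+3)"
  have "integral\<^sup>L lborel (\<lambda>t. indicator {0..xi} t *\<^sub>R (quadratic c t * t ^ i)) = ?F xi - ?F 0"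
  proof (rule integral_FTC_atLeastAtMost[OF assms])
    fix t :: real
    have "(?F has_real_derivative quadratic c t * t ^ i) (at t)"
      unfolding quadratic_def
      by (rule derivative_eq_intros refl | simp)+ (simp add: field_simps power2_eq_square)
    then show "(?F has_vector_derivative quadratic c t * t ^ i) (at t within {0..xi})"
      by (simp add: has_real_derivative_iff_has_vector_derivative has_vector_derivative_at_within)
  qed (unfold quadratic_def, intro continuous_intros)
  then show ?thesis
    unfolding moment_def set_lebesgue_integral_def by simp
qed

lemma quadratic_zero [simp]: "quadratic 0 = (\<lambda>t. 0)"
  by (simp add: quadratic_def fun_eq_iff)

lemma quadratic_diff: "quadratic (c - d) t = quadratic c t - quadratic d t"
  by (simp add: quadratic_def algebra_simps)

lemma quadratic_uminus: "quadratic (- c) t = - quadratic c t"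
  by (simp add: quadratic_def algebra_simps)

lemma Sop_eq_quadratic:
  assumes "L2 xi f"
  shows "Sop xi f x = f x + quadratic (Sop_coeffs xi f) x"
proof -
  have int: "set_integrable lborel {0..xi} (\<lambda>t. f t * t ^ i)" for i
    using assms by (rule L2_moment_integrable)
  have "(\<lambda>t. f t * (x - t)\<^sup>2) = (\<lambda>t. x\<^sup>2 * (f t * t ^ 0) - 2 * x * (f t * t ^ 1) + f t * t ^ 2)"
    by (auto simp: power2_eq_square algebra_simps)
  then have "(LINT t:{0..xi}|lborel. f t * (x - t)\<^sup>2)
      = x\<^sup>2 * moment xi f 0 - 2 * x * moment xi f 1 + moment xi f 2"
    unfolding moment_def
    by (simp only: set_integral_add(2) set_integral_diff set_integral_diff(2) set_integral_mult_right
        set_integrable_mult_right int)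
  then show ?thesis
    unfolding Sop_def quadratic_def Sop_coeffs_def by (simp add: algebra_simps)
qed

lemma Sop_coeffs_diff:
  assumes "L2 xi f" "L2 xi g"
  shows "Sop_coeffs xi (\<lambda>t. f t - g t) = Sop_coeffs xi f - Sop_coeffs xi g"
  unfolding Sop_coeffs_def moment_diff[OF assms]
  by (simp add: vec_eq_iff forall_3 algebra_simps)

lemma Sop_coeffs_cong_AE:
  assumes "L2 xi f" "L2 xi g" "ae_eq_on xi f g"
  shows "Sop_coeffs xi f = Sop_coeffs xi g"
  unfolding Sop_coeffs_def using moment_cong_AE[OF assms] by simp

lemma Sop_coeffs_quadratic:
  assumes "0 \<le> xi"
  shows "Sop_coeffs xi (quadratic c) = moment_matrix xi *v c"
  unfolding Sop_coeffs_def moment_quadratic[OF assms] moment_matrix_def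
  by (simp add: vec_eq_iff forall_3 matrix_vector_mult_def sum_3 field_simps eval_nat_numeral)

lemma Sop_quadratic:
  assumes "0 \<le> xi"
  shows "Sop xi (quadratic c) x = quadratic ((mat 1 + moment_matrix xi) *v c) x"
  unfolding Sop_eq_quadratic[OF L2_quadratic] Sop_coeffs_quadratic[OF assms]
  by (simp add: quadratic_def matrix_vector_mult_add_rdistrib algebra_simps)

lemma quadratic_scaleR: "quadratic (r *\<^sub>R c) t = r * quadratic c t"
  by (simp add: quadratic_def algebra_simps)

lemma Sop_diff:
  assumes "L2 xi f" "L2 xi g"
  shows "Sop xi (\<lambda>t. f t - g t) x = Sop xi f x - Sop xi g x"
  unfolding Sop_eq_quadratic[OF L2_diff[OF assms]] Sop_eq_quadratic[OF assms(1)]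
    Sop_eq_quadratic[OF assms(2)] Sop_coeffs_diff[OF assms] quadratic_diff
  by simp

lemma det_system_matrix: "det (mat 1 + moment_matrix xi) = Delta xi"
  unfolding det_3 moment_matrix_def Delta_def
  by (simp add: mat_def) (simp add: field_simps, algebra)

lemma S_invertible_if_det_nonzero:
  assumes xi: "0 \<le> xi" and det: "det (mat 1 + moment_matrix xi) \<noteq> 0"
  shows "S_invertible xi"
  unfolding S_invertible_def
proof (intro conjI allI impI)
  fix g assume g: "L2 xi g"
  obtain c where c: "(mat 1 + moment_matrix xi) *v c = Sop_coeffs xi g"
    using cramer[OF det] by blast
  have "Sop xi (\<lambda>t. g t - quadratic c t) x = g x" for x
    unfolding Sop_diff[OF g L2_quadratic] Sop_quadratic[OF xi] c Sop_eq_quadratic[OF g] by simp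
  then show "\<exists>f. L2 xi f \<and> ae_eq_on xi (Sop xi f) g"
    using L2_diff[OF g L2_quadratic] unfolding ae_eq_on_def by auto
next
  fix f1 f2 assume "L2 xi f1 \<and> L2 xi f2 \<and> ae_eq_on xi (Sop xi f1) (Sop xi f2)"
  then have f1: "L2 xi f1" and f2: "L2 xi f2" and S: "ae_eq_on xi (Sop xi f1) (Sop xi f2)"
    by auto
  define h where "h = (\<lambda>t. f1 t - f2 t)"
  define c where "c = Sop_coeffs xi h"
  have h: "L2 xi h"
    unfolding h_def using f1 f2 by (rule L2_diff)
  have "ae_eq_on xi h (quadratic (- c))"
    using S unfolding ae_eq_on_def
  proof eventually_elim
    case (elim t)
    then have "Sop xi h t = 0 \<or> t \<notin> {0..xi}"
      unfolding h_def Sop_diff[OF f1 f2] by auto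
    then show ?case
      unfolding Sop_eq_quadratic[OF h] c_def[symmetric] quadratic_uminus by auto
  qed
  then have "c = moment_matrix xi *v (- c)"
    unfolding c_def Sop_coeffs_quadratic[OF xi, symmetric]
    by (rule Sop_coeffs_cong_AE[OF h L2_quadratic])
  moreover have "moment_matrix xi *v (- c) = - (moment_matrix xi *v c)"
    using matrix_vector_mult_diff_distrib[of "moment_matrix xi" 0 c] by simp
  ultimately have "(mat 1 + moment_matrix xi) *v c = 0"
    by (metis eq_neg_iff_add_eq_0 matrix_vector_mult_add_rdistrib matrix_vector_mul_lid)
  then have "c = 0"
    using det det_eq_0_iff_nontrivial_kernel by blast
  with \<open>ae_eq_on xi h (quadratic (- c))\<close> show "ae_eq_on xi f1 f2"
    unfolding ae_eq_on_def h_def by simp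
qed

lemma not_S_invertible_if_det_zero:
  assumes xi: "0 \<le> xi" and det: "det (mat 1 + moment_matrix xi) = 0"
  shows "\<not> S_invertible xi"
proof
  assume inv: "S_invertible xi"
  obtain c where "c \<noteq> 0" and c: "(mat 1 + moment_matrix xi) *v c = 0"
    using det det_eq_0_iff_nontrivial_kernel by blast
  have "Sop xi (quadratic c) x = Sop xi (quadratic 0) x" for x
    unfolding Sop_quadratic[OF xi] c by simp
  then have "ae_eq_on xi (Sop xi (quadratic c)) (Sop xi (quadratic 0))"
    unfolding ae_eq_on_def by simp
  then have "ae_eq_on xi (quadratic c) (quadratic 0)"
    using inv L2_quadratic unfolding S_invertible_def by blast
  then have "moment_matrix xi *v c = moment_matrix xi *v 0"
    unfolding Sop_coeffs_quadratic[OF xi, symmetric]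
    by (rule Sop_coeffs_cong_AE[OF L2_quadratic L2_quadratic])
  with c have "c = 0"
    by (simp add: matrix_vector_mult_add_rdistrib)
  with \<open>c \<noteq> 0\<close> show False ..
qed

lemma S_invertible_iff_Delta:
  assumes "0 \<le> xi"
  shows "S_invertible xi \<longleftrightarrow> Delta xi \<noteq> 0"
  using S_invertible_if_det_nonzero[OF assms] not_S_invertible_if_det_zero[OF assms]
  unfolding det_system_matrix by blast

lemma Delta_factor: "Delta xi = (xi ^ 3 / 6 - 1) * (xi ^ 6 / 180 - xi ^ 3 / 6 - 1)"
  unfolding Delta_def by (simp add: field_simps)

lemma Sop_quadratic_const:
  assumes "0 \<le> xi"
  shows "Sop xi (quadratic (vector [xi ^ 3 / 6 - 1, - (xi ^ 2), xi])) x = xi ^ 6 / 180 - xi ^ 3 / 6 - 1"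
  unfolding Sop_quadratic[OF assms] moment_matrix_def
  by (simp add: quadratic_def matrix_vector_mult_def sum_3 mat_def) (simp add: field_simps eval_nat_numeral)

definition Sinv_one :: "real \<Rightarrow> real poly" where
  "Sinv_one xi = smult (1 / (xi ^ 6 / 180 - xi ^ 3 / 6 - 1)) [:xi ^ 3 / 6 - 1, - (xi ^ 2), xi:]"

lemma poly_Sinv_one_self: "poly (Sinv_one xi) xi = (xi ^ 3 / 6 - 1) / (xi ^ 6 / 180 - xi ^ 3 / 6 - 1)"
  by (simp add: Sinv_one_def algebra_simps power2_eq_square power3_eq_cube)

lemma S_inverse_one:
  assumes xi: "0 \<le> xi" and inv: "S_invertible xi"
    and f: "L2 xi f" and Sf: "ae_eq_on xi (Sop xi f) (\<lambda>_. 1)"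
  shows "ae_eq_on xi f (poly (Sinv_one xi))"
proof -
  define E where "E = xi ^ 6 / 180 - xi ^ 3 / 6 - 1"
  have "E \<noteq> 0"
    using inv S_invertible_iff_Delta[OF xi] Delta_factor unfolding E_def by auto
  define d :: "real^3" where "d = (1 / E) *\<^sub>R vector [xi ^ 3 / 6 - 1, - (xi ^ 2), xi]"
  have "Sop xi (quadratic d) x = 1" for x
    using Sop_quadratic_const[OF xi, of x] \<open>E \<noteq> 0\<close>
    unfolding d_def Sop_quadratic[OF xi] matrix_vector_mult_scaleR quadratic_scaleR E_def
    by simp
  then have "Sop xi (quadratic d) = (\<lambda>_. 1)"
    by (simp add: fun_eq_iff)
  then have "ae_eq_on xi (Sop xi f) (Sop xi (quadratic d))"
    using Sf by simp
  then have "ae_eq_on xi f (quadratic d)"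
    using inv f L2_quadratic unfolding S_invertible_def by blast
  moreover have "quadratic d = poly (Sinv_one xi)"
    using \<open>E \<noteq> 0\<close> unfolding d_def quadratic_scaleR Sinv_one_def E_def[symmetric]
    by (simp add: quadratic_def fun_eq_iff field_simps power2_eq_square)
  ultimately show ?thesis
    by simp
qed

definition r_num :: "complex poly" where
  "r_num = [:-45, 0, 0, -60, 0, 0, 16:]"

definition r_den :: "complex poly" where
  "r_den = smult (15 * of_real (sqrt 2)) [:-3, 0, 0, 4:]"

lemma poly_r_num: "poly r_num x = 16 * x ^ 6 - 60 * x ^ 3 - 45"
  by (simp add: r_num_def algebra_simps eval_nat_numeral)

lemma poly_r_den: "poly r_den x = 15 * of_real (sqrt 2) * (4 * x ^ 3 - 3)"
  by (simp add: r_den_def algebra_simps eval_nat_numeral)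

lemma r_fun_eq:
  assumes "poly r_den x \<noteq> 0"
  shows "r_fun x = poly r_num x / poly r_den x"
proof -
  have "h2 (2 * x) = (4 * x ^ 3 - 3) / 3 / (poly r_num x / 45)"
    unfolding h2_def poly_r_num by (simp add: field_simps eval_nat_numeral)
  then show ?thesis
    using assms unfolding r_fun_def poly_r_den by (simp add: field_simps)
qed

lemma q_fun_eq:
  assumes "poly r_num x \<noteq> 0"
  shows "q_fun x = poly r_den x / poly r_num x"
proof (cases "poly r_den x = 0")
  case True
  then have "h2 (2 * x) = 0"
    unfolding h2_def poly_r_den by (simp add: eval_nat_numeral)
  with True show ?thesis
    unfolding q_fun_def r_fun_def by simp
next
  case False
  with assms show ?thesis
    unfolding q_fun_def r_fun_eq[OF False] by simp
qed

lemma coprime_r_num_r_den: "coprime r_num r_den"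
proof (rule coprimeI)
  fix d assume dP: "d dvd r_num" and dQ: "d dvd r_den"
  have "d dvd [:-3, 0, 0, 4:]"
    using dQ unfolding r_den_def by (rule dvd_smult_cancel) simp
  then have "d dvd [:-3, 0, 0, 4:] * [:-12, 0, 0, 4:] - r_num"
    using dP by (intro dvd_diff dvd_mult2)
  also have "[:-3, 0, 0, 4:] * [:-12, 0, 0, 4:] - r_num = [:81:]"
    by (simp add: r_num_def)
  finally show "is_unit d"
    by (rule dvd_unit_imp_unit) (simp add: is_unit_const_poly_iff dvd_field_iff)
qed

lemma rsquarefree_r_num: "rsquarefree r_num"
  unfolding rsquarefree_roots
proof (intro allI notI)
  fix a assume "poly r_num a = 0 \<and> poly (pderiv r_num) a = 0"
  then have P: "16 * a ^ 6 - 60 * a ^ 3 - 45 = 0" and "a ^ 2 * (8 * a ^ 3 - 15) = 0"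
    by (simp_all add: poly_r_num r_num_def pderiv_pCons algebra_simps eval_nat_numeral)
  then have "a ^ 2 = 0 \<or> 8 * a ^ 3 - 15 = 0"
    by (simp only: mult_eq_0_iff)
  then have "a = 0 \<or> a ^ 3 = 15 / 8"
    by (auto simp: field_simps)
  then show False
  proof
    assume "a = 0"
    with P show False
      by simp
  next
    assume a3: "a ^ 3 = 15 / 8"
    have "0 = 16 * (a ^ 3)\<^sup>2 - 60 * a ^ 3 - 45"
      using P by (simp flip: power_mult)
    also have "\<dots> = 16 * (15 / 8)\<^sup>2 - 60 * (15 / 8) - 45"
      by (simp only: a3)
    finally show False
      by (simp add: power2_eq_square)
  qed
qed

lemma rsquarefree_r_den: "rsquarefree r_den"
  unfolding rsquarefree_roots
  by (auto simp: poly_r_den r_den_def pderiv_smult pderiv_pCons)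

lemma r_num_deriv2_identity:
  "poly (pderiv (pderiv r_num)) x * poly r_den x - 2 * poly (pderiv r_num) x * poly (pderiv r_den) x
    = - 360 * of_real (sqrt 2) * x * poly r_num x"
  by (simp add: r_num_def r_den_def pderiv_pCons pderiv_smult) algebra

lemma r_den_deriv2_identity:
  "poly (pderiv (pderiv r_den)) x * poly r_num x - 2 * poly (pderiv r_den) x * poly (pderiv r_num) x
    = - 4 * of_real (sqrt 2) * x * (poly r_den x)\<^sup>2"
proof -
  have "(of_real (sqrt 2) :: complex)\<^sup>2 = 2"
    by (simp flip: of_real_power)
  then have "(poly r_den x)\<^sup>2 = 450 * (4 * x ^ 3 - 3)\<^sup>2"
    unfolding poly_r_den by (simp add: power_mult_distrib)
  then show ?thesis
    by (simp add: r_num_def r_den_def pderiv_pCons pderiv_smult del: poly_pCons)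
      (simp add: algebra_simps eval_nat_numeral)
qed

lemma r_fun_deriv2_at_zero:
  assumes "poly r_num x = 0"
  shows "deriv (deriv r_fun) x = 0"
proof -
  have "poly r_den x \<noteq> 0"
    using coprime_r_num_r_den assms by (rule coprime_imp_no_common_root)
  with assms show ?thesis
    using deriv2_poly_quotient_at_root[OF r_fun_eq] r_num_deriv2_identity by simp
qed

lemma q_fun_deriv2_at_zero:
  assumes "poly r_den y = 0"
  shows "deriv (deriv q_fun) y = 0"
proof -
  have "poly r_num y \<noteq> 0"
    using coprime_r_num_r_den[THEN coprime_commute[THEN iffD1]] assms
    by (rule coprime_imp_no_common_root)
  with assms show ?thesis
    using deriv2_poly_quotient_at_root[OF q_fun_eq] r_den_deriv2_identity by simp
qed

theorem mainTheorem15: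
  shows "(\<forall>xi>0. S_invertible xi \<longleftrightarrow> Delta xi \<noteq> 0)
    \<and> (\<forall>xi>0. S_invertible xi \<longrightarrow>
          (\<exists>p :: real poly.
             (\<forall>f. L2 xi f \<and> ae_eq_on xi (Sop xi f) (\<lambda>_. 1) \<longrightarrow> ae_eq_on xi f (poly p))
           \<and> poly p xi = (xi ^ 3 / 6 - 1) / (xi ^ 6 / 180 - xi ^ 3 / 6 - 1)))
    \<and> (\<exists>P Q :: complex poly.
          coprime P Q
        \<and> (\<forall>x. poly Q x \<noteq> 0 \<longrightarrow> r_fun x = poly P x / poly Q x)
        \<and> rsquarefree P \<and> rsquarefree Q
        \<and> (\<forall>x. poly P x = 0 \<longrightarrow> deriv (deriv r_fun) x = 0)
        \<and> (\<forall>y. poly Q y = 0 \<longrightarrow> deriv (deriv q_fun) y = 0))"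
  using S_invertible_iff_Delta S_inverse_one poly_Sinv_one_self
    coprime_r_num_r_den r_fun_eq rsquarefree_r_num rsquarefree_r_den
    r_fun_deriv2_at_zero q_fun_deriv2_at_zero
  by (blast intro: less_imp_le)

end
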